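(* Let $\mathcal{L}=(R_i:i<k)$ be a finite relational language, $K$ a Fraïssé class of finite $\mathcal{L}$-structures with the Strong Amalgamation Property, $T$ the theory of its Fraïssé limit, and $N=(A,B)$ a monster model of $T_{pfc}$ (with $A$ the universe of sort $O$ and $B$ of sort $P$). For $j=1,\dots,n$ let $\phi_j(x,y_j,z_j)$ be $\mathcal{L}_{pfc}$-formulas where $x$ is a single variable of sort $O$, $y_j$ is a tuple of variables of sort $O$, and $z_j$ is a single variable of sort $P$; let $a_j$ be tuples from $A$ and let $b_1,\dots,b_n\in B$ be pairwise distinct. If each $\phi_j(x,a_j,b_j)$ is non-algebraic (has infinitely many realizations in $N$), then the conjunction $\bigwedge_{j=1}^n\phi_j(x,a_j,b_j)$ is non-algebraic.
   Context: $K$ has SAP if for all $A,B,C\in K$ and embeddings $e:A\to B$, $f:A\to C$ there are $D\in K$ and embeddings $g:B\to D$, $h:C\to D$ with $ge=hf$ and $\mathrm{im}(g)\cap\mathrm{im}(h)=\mathrm{im}(ge)$. If $R_i$ has arity $n_i$, $\mathcal{L}_{pfc}$ is the two-sorted language with sorts $O$ and $P$ and relation symbols $R^i_x(x,y_1,\dots,y_{n_i})$ with $x$ of sort $P$ and $y_1,\dots,y_{n_i}$ of sort $O$. For an $\mathcal{L}_{pfc}$-structure $M=(A,B)$ and $b\in B$, $A_b$ is the $\mathcal{L}$-structure with domain $A$ in which $R_i$ is interpreted as $\{\bar y: R^i(b,\bar y)\}$. $K_{pfc}$ is the class of finite $\mathcal{L}_{pfc}$-structures $(A,B)$ such that $A_b$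 is isomorphic to a member of $K$ for every $b\in B$; it is a Fraïssé class with SAP, and $T_{pfc}$ is the theory of its Fraïssé limit (it has quantifier elimination). *)

theory Defs
  imports Main "HOL-Library.Countable_Set"
begin

text \<open>An L-structure with universe of type 'a: a carrier set and an interpretation
  of the relation symbols (index i, tuple as a list).\<close>
type_synonym 'a str = "'a set \<times> (nat \<Rightarrow> 'a list \<Rightarrow> bool)"

definition wf_str :: "nat \<Rightarrow> (nat \<Rightarrow> nat) \<Rightarrow> 'a str \<Rightarrow> bool" where
  "wf_str k ar S \<longleftrightarrow>
     (\<forall>i xs. snd S i xs \<longrightarrow> i < k \<and> length xs = ar i \<and> set xs \<subseteq> fst S)"

definition emb_str :: "'a str \<Rightarrow> 'b str \<Rightarrow> ('a \<Rightarrow> 'b) \<Rightarrow> bool" where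
  "emb_str S S' f \<longleftrightarrow> inj_on f (fst S) \<and> f ` fst S \<subseteq> fst S' \<and>
     (\<forall>i xs. set xs \<subseteq> fst S \<longrightarrow> (snd S i xs \<longleftrightarrow> snd S' i (map f xs)))"

definition isomorphic_str :: "'a str \<Rightarrow> 'b str \<Rightarrow> bool" where
  "isomorphic_str S S' \<longleftrightarrow> (\<exists>f. emb_str S S' f \<and> f ` fst S = fst S')"

definition substr :: "'a str \<Rightarrow> 'a set \<Rightarrow> 'a str" where
  "substr S U = (U, \<lambda>i xs. snd S i xs \<and> set xs \<subseteq> U)"

text \<open>A class K of finite L-structures (represented, up to isomorphism, by structures
  with carriers in nat) is a Fraisse class: nonempty, closed under isomorphism,
  hereditary, JEP, AP.  (Countably many isomorphism types is automatic for a
  finite relational language.)\<close>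
definition fraisse_class :: "nat \<Rightarrow> (nat \<Rightarrow> nat) \<Rightarrow> nat str set \<Rightarrow> bool" where
  "fraisse_class k ar K \<longleftrightarrow>
     K \<noteq> {} \<and>
     (\<forall>S\<in>K. finite (fst S) \<and> wf_str k ar S) \<and>
     (\<forall>S\<in>K. \<forall>S'. wf_str k ar S' \<and> isomorphic_str S S' \<longrightarrow> S' \<in> K) \<and>
     (\<forall>S\<in>K. \<forall>U. U \<subseteq> fst S \<longrightarrow> substr S U \<in> K) \<and>
     (\<forall>S1\<in>K. \<forall>S2\<in>K. \<exists>D\<in>K. \<exists>f g. emb_str S1 D f \<and> emb_str S2 D g) \<and>
     (\<forall>A\<in>K. \<forall>B\<in>K. \<forall>C\<in>K. \<forall>e f. emb_str A B e \<and> emb_str A C f \<longrightarrow>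
        (\<exists>D\<in>K. \<exists>g h. emb_str B D g \<and> emb_str C D h \<and>
            (\<forall>x\<in>fst A. g (e x) = h (f x))))"

definition SAP :: "nat str set \<Rightarrow> bool" where
  "SAP K \<longleftrightarrow>
     (\<forall>A\<in>K. \<forall>B\<in>K. \<forall>C\<in>K. \<forall>e f. emb_str A B e \<and> emb_str A C f \<longrightarrow>
        (\<exists>D\<in>K. \<exists>g h. emb_str B D g \<and> emb_str C D h \<and>
            (\<forall>x\<in>fst A. g (e x) = h (f x)) \<and>
            g ` fst B \<inter> h ` fst C = (g \<circ> e) ` fst A))"

record ('o, 'p) pstr =
  OS :: "'o set"
  PS :: "'p set"
  PR :: "nat \<Rightarrow> 'p \<Rightarrow> 'o list \<Rightarrow> bool"

definition wf_pstr :: "nat \<Rightarrow> (nat \<Rightarrow> nat) \<Rightarrow> ('o, 'p) pstr \<Rightarrow> bool" where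
  "wf_pstr k ar M \<longleftrightarrow>
     (\<forall>i b ys. PR M i b ys \<longrightarrow> i < k \<and> b \<in> PS M \<and> length ys = ar i \<and> set ys \<subseteq> OS M)"

definition fiber :: "('o, 'p) pstr \<Rightarrow> 'p \<Rightarrow> 'o str" where
  "fiber M b = (OS M, \<lambda>i ys. PR M i b ys)"

definition in_Kpfc :: "nat \<Rightarrow> (nat \<Rightarrow> nat) \<Rightarrow> nat str set \<Rightarrow> ('o, 'p) pstr \<Rightarrow> bool" where
  "in_Kpfc k ar K M \<longleftrightarrow> finite (OS M) \<and> finite (PS M) \<and> wf_pstr k ar M \<and>
     (\<forall>b\<in>PS M. \<exists>S\<in>K. isomorphic_str (fiber M b) S)"

definition pemb :: "('o, 'p) pstr \<Rightarrow> ('o2, 'p2) pstr \<Rightarrow> ('o \<Rightarrow> 'o2) \<Rightarrow> ('p \<Rightarrow> 'p2) \<Rightarrow> bool" where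
  "pemb M M' fo fp \<longleftrightarrow>
     inj_on fo (OS M) \<and> fo ` OS M \<subseteq> OS M' \<and> inj_on fp (PS M) \<and> fp ` PS M \<subseteq> PS M' \<and>
     (\<forall>i. \<forall>b\<in>PS M. \<forall>ys. set ys \<subseteq> OS M \<longrightarrow> (PR M i b ys \<longleftrightarrow> PR M' i (fp b) (map fo ys)))"

definition pautom :: "('o, 'p) pstr \<Rightarrow> ('o \<Rightarrow> 'o) \<Rightarrow> ('p \<Rightarrow> 'p) \<Rightarrow> bool" where
  "pautom M go gp \<longleftrightarrow> pemb M M go gp \<and> go ` OS M = OS M \<and> gp ` PS M = PS M"

definition psub :: "('o, 'p) pstr \<Rightarrow> 'o set \<Rightarrow> 'p set \<Rightarrow> ('o, 'p) pstr" where
  "psub M U V = \<lparr>OS = U, PS = V, PR = (\<lambda>i b ys. PR M i b ys \<and> b \<in> V \<and> set ys \<subseteq> U)\<rparr>"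

definition fraisse_limit_pfc :: "nat \<Rightarrow> (nat \<Rightarrow> nat) \<Rightarrow> nat str set \<Rightarrow> (nat, nat) pstr \<Rightarrow> bool" where
  "fraisse_limit_pfc k ar K M \<longleftrightarrow>
     wf_pstr k ar M \<and>
     (\<forall>U V. U \<subseteq> OS M \<and> V \<subseteq> PS M \<and> finite U \<and> finite V \<longrightarrow> in_Kpfc k ar K (psub M U V)) \<and>
     (\<forall>S :: (nat, nat) pstr. in_Kpfc k ar K S \<longrightarrow> (\<exists>fo fp. pemb S M fo fp)) \<and>
     (\<forall>U V fo fp. U \<subseteq> OS M \<and> V \<subseteq> PS M \<and> finite U \<and> finite V \<and> pemb (psub M U V) M fo fp
        \<longrightarrow> (\<exists>go gp. pautom M go gp \<and> (\<forall>u\<in>U. go u = fo u) \<and> (\<forall>v\<in>V. gp v = fp v)))"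

datatype pfm =
    EqO nat nat
  | EqP nat nat
  | Rel nat nat "nat list" \<comment> \<open>R^i(z; y_1..y_n): symbol i, P-variable z, O-variables ys\<close>
  | FF
  | Neg pfm
  | Conj pfm pfm
  | ExO nat pfm
  | ExP nat pfm

fun psat :: "('o, 'p) pstr \<Rightarrow> (nat \<Rightarrow> 'o) \<Rightarrow> (nat \<Rightarrow> 'p) \<Rightarrow> pfm \<Rightarrow> bool" where
  "psat M vo vp (EqO i j) = (vo i = vo j)"
| "psat M vo vp (EqP i j) = (vp i = vp j)"
| "psat M vo vp (Rel i z ys) = PR M i (vp z) (map vo ys)"
| "psat M vo vp FF = False"
| "psat M vo vp (Neg \<phi>) = (\<not> psat M vo vp \<phi>)"
| "psat M vo vp (Conj \<phi> \<psi>) = (psat M vo vp \<phi> \<and> psat M vo vp \<psi>)"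
| "psat M vo vp (ExO v \<phi>) = (\<exists>c\<in>OS M. psat M (vo(v := c)) vp \<phi>)"
| "psat M vo vp (ExP v \<phi>) = (\<exists>d\<in>PS M. psat M vo (vp(v := d)) \<phi>)"

fun freeO :: "pfm \<Rightarrow> nat set" where
  "freeO (EqO i j) = {i, j}"
| "freeO (EqP i j) = {}"
| "freeO (Rel i z ys) = set ys"
| "freeO FF = {}"
| "freeO (Neg \<phi>) = freeO \<phi>"
| "freeO (Conj \<phi> \<psi>) = freeO \<phi> \<union> freeO \<psi>"
| "freeO (ExO v \<phi>) = freeO \<phi> - {v}"
| "freeO (ExP v \<phi>) = freeO \<phi>"

fun freeP :: "pfm \<Rightarrow> nat set" where
  "freeP (EqO i j) = {}"
| "freeP (EqP i j) = {i, j}"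
| "freeP (Rel i z ys) = {z}"
| "freeP FF = {}"
| "freeP (Neg \<phi>) = freeP \<phi>"
| "freeP (Conj \<phi> \<psi>) = freeP \<phi> \<union> freeP \<psi>"
| "freeP (ExO v \<phi>) = freeP \<phi>"
| "freeP (ExP v \<phi>) = freeP \<phi> - {v}"

definition sentence :: "pfm \<Rightarrow> bool" where
  "sentence \<phi> \<longleftrightarrow> freeO \<phi> = {} \<and> freeP \<phi> = {}"

text \<open>N is a model of T_pfc = Th(Fraisse limit of K_pfc).\<close>
definition model_Tpfc :: "nat \<Rightarrow> (nat \<Rightarrow> nat) \<Rightarrow> nat str set \<Rightarrow> ('o, 'p) pstr \<Rightarrow> bool" where
  "model_Tpfc k ar K N \<longleftrightarrow> wf_pstr k ar N \<and>
     (\<exists>M. fraisse_limit_pfc k ar K M \<and>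
        (\<forall>\<phi>. sentence \<phi> \<longrightarrow>
           (psat M (\<lambda>_. 0) (\<lambda>_. 0) \<phi> \<longleftrightarrow> psat N (\<lambda>_. undefined) (\<lambda>_. undefined) \<phi>)))"

text \<open>Formulas with parameters: a formula together with an assignment; the type
  variable is O-variable 0 (resp. P-variable 0); all other free variables are sent into
  the parameter sets Po, Pp.\<close>
definition params_in :: "'o set \<Rightarrow> 'p set \<Rightarrow> pfm \<Rightarrow> (nat \<Rightarrow> 'o) \<Rightarrow> (nat \<Rightarrow> 'p) \<Rightarrow> nat set \<Rightarrow> nat set \<Rightarrow> bool" where
  "params_in Po Pp \<phi> vo vp XO XP \<longleftrightarrow>
     (\<forall>l\<in>freeO \<phi> - XO. vo l \<in> Po) \<and> (\<forall>l\<in>freeP \<phi> - XP. vp l \<in> Pp)"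

definition saturated :: "('o, 'p) pstr \<Rightarrow> ('o + 'p) set \<Rightarrow> bool" where
  "saturated N \<kappa> \<longleftrightarrow>
     (\<forall>Po Pp. Po \<subseteq> OS N \<and> Pp \<subseteq> PS N \<and> (card_of (Po <+> Pp), card_of \<kappa>) \<in> ordLess \<longrightarrow>
       (\<forall>\<Sigma>. (\<forall>(\<phi>, vo, vp)\<in>\<Sigma>. params_in Po Pp \<phi> vo vp {0} {}) \<and>
             (\<forall>F. F \<subseteq> \<Sigma> \<and> finite F \<longrightarrow>
                 (\<exists>c\<in>OS N. \<forall>(\<phi>, vo, vp)\<in>F. psat N (vo(0 := c)) vp \<phi>))
          \<longrightarrow> (\<exists>c\<in>OS N. \<forall>(\<phi>, vo, vp)\<in>\<Sigma>. psat N (vo(0 := c)) vp \<phi>)) \<and>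
       (\<forall>\<Sigma>. (\<forall>(\<phi>, vo, vp)\<in>\<Sigma>. params_in Po Pp \<phi> vo vp {} {0}) \<and>
             (\<forall>F. F \<subseteq> \<Sigma> \<and> finite F \<longrightarrow>
                 (\<exists>d\<in>PS N. \<forall>(\<phi>, vo, vp)\<in>F. psat N vo (vp(0 := d)) \<phi>))
          \<longrightarrow> (\<exists>d\<in>PS N. \<forall>(\<phi>, vo, vp)\<in>\<Sigma>. psat N vo (vp(0 := d)) \<phi>)))"

definition strongly_homogeneous :: "('o, 'p) pstr \<Rightarrow> ('o + 'p) set \<Rightarrow> bool" where
  "strongly_homogeneous N \<kappa> \<longleftrightarrow>
     (\<forall>Po Pp fo fp. Po \<subseteq> OS N \<and> Pp \<subseteq> PS N \<and> (card_of (Po <+> Pp), card_of \<kappa>) \<in> ordLess \<and>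
        fo ` Po \<subseteq> OS N \<and> fp ` Pp \<subseteq> PS N \<and>
        (\<forall>\<phi> vo vp. params_in Po Pp \<phi> vo vp {} {} \<longrightarrow>
            (psat N vo vp \<phi> \<longleftrightarrow> psat N (fo \<circ> vo) (fp \<circ> vp) \<phi>))
      \<longrightarrow> (\<exists>go gp. pautom N go gp \<and> (\<forall>u\<in>Po. go u = fo u) \<and> (\<forall>v\<in>Pp. gp v = fp v)))"

definition monster_Tpfc :: "nat \<Rightarrow> (nat \<Rightarrow> nat) \<Rightarrow> nat str set \<Rightarrow> ('o, 'p) pstr \<Rightarrow> bool" where
  "monster_Tpfc k ar K N \<longleftrightarrow> model_Tpfc k ar K N \<and>
     (\<exists>\<kappa>. \<not> countable \<kappa> \<and> saturated N \<kappa> \<and> strongly_homogeneous N \<kappa>)"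

text \<open>Realizations in N of phi(x, a, b): x is O-variable 0, the tuple a occupies
  O-variables 1..length a, and b is P-variable 0.\<close>
definition realizations :: "('o, 'p) pstr \<Rightarrow> pfm \<Rightarrow> 'o list \<Rightarrow> 'p \<Rightarrow> 'o set" where
  "realizations N \<phi> a b =
     {c \<in> OS N. psat N (\<lambda>l. if l = 0 then c else a ! (l - 1)) (\<lambda>_. b) \<phi>}"

end

theory Submission
  imports Defs
begin

text \<open>
  The Fraisse limit M of K_pfc is ultrahomogeneous, so in M the truth of a formula at a finite
  tuple depends only on the quantifier-free type of the tuple; as a model N of T_pfc is
  elementarily equivalent to M (and every finite tuple of N is copied into M by its existential
  quantifier-free diagram), the same holds in N.

  Given a finite set X, pick realizations c_j of phi_j(x, a_j, b_j) outside X. Because the b_j are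
  pairwise distinct, the fibers A_b_j can be treated independently: strong amalgamation of the
  fiber over X with the fiber over a_j \<union> {c_j} produces, for each j, a one-point extension of X;
  all of them together form a finite member of K_pfc, which embeds into M over X. Its new point,
  carried back to N, is a single c outside X with the same quantifier-free type as c_j over a_j
  in the fiber at b_j, for every j, and so realizes every phi_j(x, a_j, b_j).
\<close>

lemma psat_cong:
  "(\<forall>l\<in>freeO \<phi>. vo l = vo' l) \<Longrightarrow> (\<forall>l\<in>freeP \<phi>. vp l = vp' l) \<Longrightarrow>
   psat S vo vp \<phi> = psat S vo' vp' \<phi>"
proof (induction \<phi> arbitrary: vo vp vo' vp')
  case (Rel i z ys)
  then show ?case by (simp cong: map_cong)
next
  case (ExO v \<phi>)
  then have "\<And>c. psat S (vo(v:=c)) vp \<phi> = psat S (vo'(v:=c)) vp' \<phi>"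
    by (intro ExO.IH) auto
  then show ?case by simp
next
  case (ExP v \<phi>)
  then have "\<And>c. psat S vo (vp(v:=c)) \<phi> = psat S vo' (vp'(v:=c)) \<phi>"
    by (intro ExP.IH) auto
  then show ?case by simp
next
  case (Conj \<phi> \<psi>)
  have "psat S vo vp \<phi> = psat S vo' vp' \<phi>" using Conj.prems by (intro Conj.IH(1)) auto
  moreover have "psat S vo vp \<psi> = psat S vo' vp' \<psi>" using Conj.prems by (intro Conj.IH(2)) auto
  ultimately show ?case by simp
qed auto

fun exOs :: "nat list \<Rightarrow> pfm \<Rightarrow> pfm" where
  "exOs [] p = p"
| "exOs (v # vs) p = ExO v (exOs vs p)"

fun exPs :: "nat list \<Rightarrow> pfm \<Rightarrow> pfm" where
  "exPs [] p = p"
| "exPs (v # vs) p = ExP v (exPs vs p)"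

lemma freeO_exOs [simp]: "freeO (exOs vs p) = freeO p - set vs"
  by (induction vs) auto

lemma freeP_exOs [simp]: "freeP (exOs vs p) = freeP p"
  by (induction vs) auto

lemma freeO_exPs [simp]: "freeO (exPs vs p) = freeO p"
  by (induction vs) auto

lemma freeP_exPs [simp]: "freeP (exPs vs p) = freeP p - set vs"
  by (induction vs) auto

lemma psat_exOs:
  "psat S vo vp (exOs vs p) \<longleftrightarrow>
   (\<exists>vo'. (\<forall>l. l \<notin> set vs \<longrightarrow> vo' l = vo l) \<and> (\<forall>l\<in>set vs. vo' l \<in> OS S) \<and> psat S vo' vp p)"
  (is "_ \<longleftrightarrow> ?R vo vs")
proof (induction vs arbitrary: vo)
  case Nil
  have "(\<forall>l. vo' l = vo l) \<longleftrightarrow> vo' = vo" for vo' by auto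
  then show ?case by simp
next
  case (Cons v vs)
  show ?case
  proof
    assume "psat S vo vp (exOs (v # vs) p)"
    then obtain c vo' where "c \<in> OS S" "\<forall>l. l \<notin> set vs \<longrightarrow> vo' l = (vo(v:=c)) l"
      "\<forall>l\<in>set vs. vo' l \<in> OS S" "psat S vo' vp p"
      using Cons.IH by auto
    moreover from calculation have "vo' v \<in> OS S" by (cases "v \<in> set vs") auto
    ultimately show "?R vo (v # vs)" by (intro exI[of _ vo']) auto
  next
    assume "?R vo (v # vs)"
    then obtain vo' where "\<forall>l. l \<notin> set (v # vs) \<longrightarrow> vo' l = vo l" "\<forall>l\<in>set (v # vs). vo' l \<in> OS S"
      "psat S vo' vp p"
      by blast
    then have "vo' v \<in> OS S" "psat S (vo(v := vo' v)) vp (exOs vs p)"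
      by (auto simp: Cons.IH intro!: exI[of _ vo'])
    then show "psat S vo vp (exOs (v # vs) p)" by auto
  qed
qed

lemma psat_exPs:
  "psat S vo vp (exPs vs p) \<longleftrightarrow>
   (\<exists>vp'. (\<forall>l. l \<notin> set vs \<longrightarrow> vp' l = vp l) \<and> (\<forall>l\<in>set vs. vp' l \<in> PS S) \<and> psat S vo vp' p)"
  (is "_ \<longleftrightarrow> ?R vp vs")
proof (induction vs arbitrary: vp)
  case Nil
  have "(\<forall>l. vp' l = vp l) \<longleftrightarrow> vp' = vp" for vp' by auto
  then show ?case by simp
next
  case (Cons v vs)
  show ?case
  proof
    assume "psat S vo vp (exPs (v # vs) p)"
    then obtain c vp' where "c \<in> PS S" "\<forall>l. l \<notin> set vs \<longrightarrow> vp' l = (vp(v:=c)) l"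
      "\<forall>l\<in>set vs. vp' l \<in> PS S" "psat S vo vp' p"
      using Cons.IH by auto
    moreover from calculation have "vp' v \<in> PS S" by (cases "v \<in> set vs") auto
    ultimately show "?R vp (v # vs)" by (intro exI[of _ vp']) auto
  next
    assume "?R vp (v # vs)"
    then obtain vp' where "\<forall>l. l \<notin> set (v # vs) \<longrightarrow> vp' l = vp l" "\<forall>l\<in>set (v # vs). vp' l \<in> PS S"
      "psat S vo vp' p"
      by blast
    then have "vp' v \<in> PS S" "psat S vo (vp(v := vp' v)) (exPs vs p)"
      by (auto simp: Cons.IH intro!: exI[of _ vp'])
    then show "psat S vo vp (exPs (v # vs) p)" by auto
  qed
qed

definition in_carriers :: "('o,'p) pstr \<Rightarrow> (nat \<Rightarrow> 'o) \<Rightarrow> (nat \<Rightarrow> 'p) \<Rightarrow> nat set \<Rightarrow> nat set \<Rightarrow> bool" where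
  "in_carriers S vo vp VO VP \<longleftrightarrow> (\<forall>l\<in>VO. vo l \<in> OS S) \<and> (\<forall>z\<in>VP. vp z \<in> PS S)"

lemma psat_existential_closure:
  assumes "freeO p \<subseteq> set xs" "freeP p \<subseteq> set zs"
  shows "psat S vo vp (exOs xs (exPs zs p)) \<longleftrightarrow>
    (\<exists>vo' vp'. in_carriers S vo' vp' (set xs) (set zs) \<and> psat S vo' vp' p)"
proof
  assume "psat S vo vp (exOs xs (exPs zs p))"
  then show "\<exists>vo' vp'. in_carriers S vo' vp' (set xs) (set zs) \<and> psat S vo' vp' p"
    unfolding psat_exOs psat_exPs in_carriers_def by blast
next
  assume "\<exists>vo' vp'. in_carriers S vo' vp' (set xs) (set zs) \<and> psat S vo' vp' p"
  then obtain vo' vp' where car: "in_carriers S vo' vp' (set xs) (set zs)" and sat: "psat S vo' vp' p"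
    by blast
  define wo where "wo l = (if l \<in> set xs then vo' l else vo l)" for l
  define wp where "wp l = (if l \<in> set zs then vp' l else vp l)" for l
  have "psat S wo wp p = psat S vo' vp' p"
    using assms by (intro psat_cong) (auto simp: wo_def wp_def)
  with sat have "psat S wo wp p" by simp
  then show "psat S vo vp (exOs xs (exPs zs p))"
    using car unfolding psat_exOs psat_exPs in_carriers_def
    by (intro exI[of _ wo] conjI exI[of _ wp]) (auto simp: wo_def wp_def)
qed

section \<open>Quantifier-free types\<close>

definition same_qftp ::
  "('o,'p) pstr \<Rightarrow> (nat \<Rightarrow> 'o) \<Rightarrow> (nat \<Rightarrow> 'p) \<Rightarrow> ('o2,'p2) pstr \<Rightarrow> (nat \<Rightarrow> 'o2) \<Rightarrow> (nat \<Rightarrow> 'p2) \<Rightarrow>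
   nat set \<Rightarrow> nat set \<Rightarrow> bool" where
  "same_qftp S vo vp T vo' vp' VO VP \<longleftrightarrow>
     (\<forall>l\<in>VO. \<forall>l'\<in>VO. vo l = vo l' \<longleftrightarrow> vo' l = vo' l') \<and>
     (\<forall>z\<in>VP. \<forall>z'\<in>VP. vp z = vp z' \<longleftrightarrow> vp' z = vp' z') \<and>
     (\<forall>i z ys. z \<in> VP \<longrightarrow> set ys \<subseteq> VO \<longrightarrow> PR S i (vp z) (map vo ys) = PR T i (vp' z) (map vo' ys))"

lemma same_qftp_refl: "same_qftp S vo vp S vo vp VO VP"
  by (simp add: same_qftp_def)

lemma same_qftp_sym: "same_qftp S vo vp T vo' vp' VO VP \<Longrightarrow> same_qftp T vo' vp' S vo vp VO VP"
  unfolding same_qftp_def by (elim conjE, intro conjI ballI allI impI; simp)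

lemma same_qftp_trans:
  "same_qftp S1 v1 w1 S2 v2 w2 VO VP \<Longrightarrow> same_qftp S2 v2 w2 S3 v3 w3 VO VP \<Longrightarrow>
   same_qftp S1 v1 w1 S3 v3 w3 VO VP"
  unfolding same_qftp_def by (elim conjE, intro conjI ballI allI impI; simp)

fun conjs :: "pfm list \<Rightarrow> pfm" where
  "conjs [] = Neg FF"
| "conjs (p # ps) = Conj p (conjs ps)"

lemma psat_conjs [simp]: "psat S vo vp (conjs ps) \<longleftrightarrow> (\<forall>p\<in>set ps. psat S vo vp p)"
  by (induction ps) auto

lemma freeO_conjs [simp]: "freeO (conjs ps) = (\<Union>p\<in>set ps. freeO p)"
  by (induction ps) auto

lemma freeP_conjs [simp]: "freeP (conjs ps) = (\<Union>p\<in>set ps. freeP p)"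
  by (induction ps) auto

definition literal :: "bool \<Rightarrow> pfm \<Rightarrow> pfm" where
  "literal t p = (if t then p else Neg p)"

lemma psat_literal [simp]: "psat S vo vp (literal t p) \<longleftrightarrow> psat S vo vp p = t"
  by (simp add: literal_def)

lemma freeO_literal [simp]: "freeO (literal t p) = freeO p"
  by (simp add: literal_def)

lemma freeP_literal [simp]: "freeP (literal t p) = freeP p"
  by (simp add: literal_def)

definition rel_atoms :: "nat \<Rightarrow> (nat \<Rightarrow> nat) \<Rightarrow> nat list \<Rightarrow> nat list \<Rightarrow> (nat \<times> nat \<times> nat list) list" where
  "rel_atoms k ar xs zs =
     concat (map (\<lambda>i. List.product [i] (List.product zs (List.n_lists (ar i) xs))) [0..<k])"

lemma set_rel_atoms:
  "set (rel_atoms k ar xs zs) =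
     {(i, z, ys). i < k \<and> z \<in> set zs \<and> length ys = ar i \<and> set ys \<subseteq> set xs}"
  unfolding rel_atoms_def by (auto simp: set_n_lists)

definition qf_diagram ::
  "nat \<Rightarrow> (nat \<Rightarrow> nat) \<Rightarrow> ('o,'p) pstr \<Rightarrow> (nat \<Rightarrow> 'o) \<Rightarrow> (nat \<Rightarrow> 'p) \<Rightarrow> nat list \<Rightarrow> nat list \<Rightarrow> pfm" where
  "qf_diagram k ar S vo vp xs zs = conjs (
     map (\<lambda>(l, l'). literal (vo l = vo l') (EqO l l')) (List.product xs xs) @
     map (\<lambda>(z, z'). literal (vp z = vp z') (EqP z z')) (List.product zs zs) @
     map (\<lambda>(i, z, ys). literal (PR S i (vp z) (map vo ys)) (Rel i z ys)) (rel_atoms k ar xs zs))"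

lemma freeO_qf_diagram: "freeO (qf_diagram k ar S vo vp xs zs) \<subseteq> set xs"
  unfolding qf_diagram_def by (auto simp: set_rel_atoms)

lemma freeP_qf_diagram: "freeP (qf_diagram k ar S vo vp xs zs) \<subseteq> set zs"
  unfolding qf_diagram_def by (auto simp: set_rel_atoms)

lemma psat_qf_diagram:
  assumes "wf_pstr k ar S" "wf_pstr k ar T"
  shows "psat T vo' vp' (qf_diagram k ar S vo vp xs zs) \<longleftrightarrow> same_qftp S vo vp T vo' vp' (set xs) (set zs)"
proof -
  have ill_typed: "PR S i (vp z) (map vo ys) = PR T i (vp' z) (map vo' ys)"
    if "\<not> (i < k \<and> length ys = ar i)" for i z ys
    using assms that unfolding wf_pstr_def by (metis length_map)
  have rel: "(\<forall>(i, z, ys)\<in>set (rel_atoms k ar xs zs). PR T i (vp' z) (map vo' ys) = PR S i (vp z) (map vo ys))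
      \<longleftrightarrow> (\<forall>i z ys. z \<in> set zs \<longrightarrow> set ys \<subseteq> set xs \<longrightarrow> PR S i (vp z) (map vo ys) = PR T i (vp' z) (map vo' ys))"
  proof
    assume atoms: "\<forall>(i, z, ys)\<in>set (rel_atoms k ar xs zs). PR T i (vp' z) (map vo' ys) = PR S i (vp z) (map vo ys)"
    show "\<forall>i z ys. z \<in> set zs \<longrightarrow> set ys \<subseteq> set xs \<longrightarrow> PR S i (vp z) (map vo ys) = PR T i (vp' z) (map vo' ys)"
    proof (intro allI impI)
      fix i z ys assume "z \<in> set zs" "set ys \<subseteq> set xs"
      then show "PR S i (vp z) (map vo ys) = PR T i (vp' z) (map vo' ys)"
        using atoms ill_typed[of i ys z] by (cases "i < k \<and> length ys = ar i") (auto simp: set_rel_atoms)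
    qed
  qed (auto simp: set_rel_atoms)
  show ?thesis
    unfolding qf_diagram_def psat_conjs set_append ball_Un same_qftp_def rel[symmetric] by auto
qed

definition partial_iso ::
  "('o,'p) pstr \<Rightarrow> ('o2,'p2) pstr \<Rightarrow> 'o set \<Rightarrow> 'p set \<Rightarrow> ('o \<Rightarrow> 'o2) \<Rightarrow> ('p \<Rightarrow> 'p2) \<Rightarrow> bool" where
  "partial_iso S T U V fo fp \<longleftrightarrow> inj_on fo U \<and> fo ` U \<subseteq> OS T \<and> inj_on fp V \<and> fp ` V \<subseteq> PS T \<and>
     (\<forall>i. \<forall>b\<in>V. \<forall>ys. set ys \<subseteq> U \<longrightarrow> (PR S i b ys \<longleftrightarrow> PR T i (fp b) (map fo ys)))"

lemma partial_iso_same_qftp: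
  assumes "partial_iso S T U V fo fp"
    and "\<forall>l\<in>VO. vo l \<in> U \<and> vo' l = fo (vo l)"
    and "\<forall>z\<in>VP. vp z \<in> V \<and> vp' z = fp (vp z)"
  shows "same_qftp S vo vp T vo' vp' VO VP"
proof -
  have "inj_on fo U" "inj_on fp V" using assms(1) unfolding partial_iso_def by auto
  then have "vo l = vo l' \<longleftrightarrow> vo' l = vo' l'" if "l \<in> VO" "l' \<in> VO" for l l'
    using assms(2) that by (auto simp: inj_on_eq_iff)
  moreover have "vp z = vp z' \<longleftrightarrow> vp' z = vp' z'" if "z \<in> VP" "z' \<in> VP" for z z'
    using \<open>inj_on fp V\<close> assms(3) that by (auto simp: inj_on_eq_iff)
  moreover have "PR S i (vp z) (map vo ys) = PR T i (vp' z) (map vo' ys)"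
    if "z \<in> VP" "set ys \<subseteq> VO" for i z ys
  proof -
    have "map vo' ys = map fo (map vo ys)" "set (map vo ys) \<subseteq> U" using that assms(2) by auto
    moreover have "vp z \<in> V" "vp' z = fp (vp z)" using assms(3) that by auto
    ultimately show ?thesis using assms(1) unfolding partial_iso_def by (metis (no_types))
  qed
  ultimately show ?thesis unfolding same_qftp_def by blast
qed

lemma same_qftp_partial_iso:
  assumes same: "same_qftp S vo vp T vo' vp' VO VP" and car: "in_carriers T vo' vp' VO VP"
  obtains fo fp where "partial_iso S T (vo ` VO) (vp ` VP) fo fp"
    "\<forall>l\<in>VO. fo (vo l) = vo' l" "\<forall>z\<in>VP. fp (vp z) = vp' z"
proof -
  define fo where "fo u = vo' (SOME l. l \<in> VO \<and> vo l = u)" for u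
  define fp where "fp u = vp' (SOME l. l \<in> VP \<and> vp l = u)" for u
  have fo: "fo (vo l) = vo' l" if "l \<in> VO" for l
  proof -
    let ?l' = "SOME l'. l' \<in> VO \<and> vo l' = vo l"
    have "\<exists>l'. l' \<in> VO \<and> vo l' = vo l" using that by blast
    then have "?l' \<in> VO \<and> vo ?l' = vo l" by (rule someI_ex)
    then show ?thesis using same that unfolding fo_def same_qftp_def by blast
  qed
  have fp: "fp (vp z) = vp' z" if "z \<in> VP" for z
  proof -
    let ?z' = "SOME z'. z' \<in> VP \<and> vp z' = vp z"
    have "\<exists>z'. z' \<in> VP \<and> vp z' = vp z" using that by blast
    then have "?z' \<in> VP \<and> vp ?z' = vp z" by (rule someI_ex)
    then show ?thesis using same that unfolding fp_def same_qftp_def by blast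
  qed
  have "PR S i b ys \<longleftrightarrow> PR T i (fp b) (map fo ys)"
    if b: "b \<in> vp ` VP" and ys: "set ys \<subseteq> vo ` VO" for i b ys
  proof -
    obtain z where z: "z \<in> VP" "b = vp z" using b by blast
    have "ys \<in> lists (vo ` VO)" using ys by blast
    then obtain ls where ls: "set ls \<subseteq> VO" "ys = map vo ls" unfolding lists_image by blast
    then have "map fo (map vo ls) = map vo' ls" using fo by auto
    moreover have "PR S i (vp z) (map vo ls) = PR T i (vp' z) (map vo' ls)"
      using same z(1) ls(1) unfolding same_qftp_def by blast
    ultimately show ?thesis by (simp only: z(2) fp[OF z(1)] ls(2))
  qed
  moreover have "inj_on fo (vo ` VO)"
  proof (rule inj_onI)
    fix x y assume "x \<in> vo ` VO" "y \<in> vo ` VO" and eq: "fo x = fo y"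
    then obtain l l' where "l \<in> VO" "l' \<in> VO" "x = vo l" "y = vo l'" by blast
    moreover from calculation have "vo' l = vo' l'" using eq fo by simp
    ultimately show "x = y" using same unfolding same_qftp_def by blast
  qed
  moreover have "inj_on fp (vp ` VP)"
  proof (rule inj_onI)
    fix x y assume "x \<in> vp ` VP" "y \<in> vp ` VP" and eq: "fp x = fp y"
    then obtain z z' where "z \<in> VP" "z' \<in> VP" "x = vp z" "y = vp z'" by blast
    moreover from calculation have "vp' z = vp' z'" using eq fp by simp
    ultimately show "x = y" using same unfolding same_qftp_def by blast
  qed
  moreover have "fo ` vo ` VO \<subseteq> OS T" "fp ` vp ` VP \<subseteq> PS T"
    using fo fp car unfolding in_carriers_def by auto
  ultimately have "partial_iso S T (vo ` VO) (vp ` VP) fo fp" unfolding partial_iso_def by blast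
  then show ?thesis using fo fp that by blast
qed

lemma psat_pautom:
  assumes "pautom M go gp" "\<forall>l\<in>freeO \<phi>. vo l \<in> OS M" "\<forall>z\<in>freeP \<phi>. vp z \<in> PS M"
  shows "psat M vo vp \<phi> \<longleftrightarrow> psat M (go \<circ> vo) (gp \<circ> vp) \<phi>"
  using assms(2,3)
proof (induction \<phi> arbitrary: vo vp)
  case (EqO i j)
  then show ?case using assms(1) unfolding pautom_def pemb_def inj_on_def by auto
next
  case (EqP i j)
  then show ?case using assms(1) unfolding pautom_def pemb_def inj_on_def by auto
next
  case (Rel i z ys)
  then have "vp z \<in> PS M" "set (map vo ys) \<subseteq> OS M" by auto
  then show ?case using assms(1) unfolding pautom_def pemb_def by (simp add: o_def)
next
  case (ExO v p)
  have onto: "go ` OS M = OS M" using assms(1) unfolding pautom_def by auto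
  have "psat M (vo(v:=c)) vp p \<longleftrightarrow> psat M ((go \<circ> vo)(v := go c)) (gp \<circ> vp) p" if "c \<in> OS M" for c
  proof -
    have "psat M (vo(v:=c)) vp p \<longleftrightarrow> psat M (go \<circ> vo(v:=c)) (gp \<circ> vp) p"
      using ExO.prems that by (intro ExO.IH) auto
    then show ?thesis by (simp only: fun_upd_comp)
  qed
  then have "psat M vo vp (ExO v p) \<longleftrightarrow> (\<exists>c\<in>OS M. psat M ((go \<circ> vo)(v := go c)) (gp \<circ> vp) p)"
    unfolding psat.simps by blast
  also have "\<dots> \<longleftrightarrow> (\<exists>c\<in>go ` OS M. psat M ((go \<circ> vo)(v := c)) (gp \<circ> vp) p)"
    by blast
  finally show ?case unfolding onto psat.simps .
next
  case (ExP v p)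
  have onto: "gp ` PS M = PS M" using assms(1) unfolding pautom_def by auto
  have "psat M vo (vp(v:=c)) p \<longleftrightarrow> psat M (go \<circ> vo) ((gp \<circ> vp)(v := gp c)) p" if "c \<in> PS M" for c
  proof -
    have "psat M vo (vp(v:=c)) p \<longleftrightarrow> psat M (go \<circ> vo) (gp \<circ> vp(v:=c)) p"
      using ExP.prems that by (intro ExP.IH) auto
    then show ?thesis by (simp only: fun_upd_comp)
  qed
  then have "psat M vo vp (ExP v p) \<longleftrightarrow> (\<exists>c\<in>PS M. psat M (go \<circ> vo) ((gp \<circ> vp)(v := gp c)) p)"
    unfolding psat.simps by blast
  also have "\<dots> \<longleftrightarrow> (\<exists>c\<in>gp ` PS M. psat M (go \<circ> vo) ((gp \<circ> vp)(v := c)) p)"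
    by blast
  finally show ?case unfolding onto psat.simps .
next
  case (Conj p q)
  then show ?case by (metis Un_iff freeO.simps(6) freeP.simps(6) psat.simps(6))
qed simp_all

section \<open>Quantifier elimination through the Fraisse limit\<close>

definition elem_equiv :: "(nat, nat) pstr \<Rightarrow> ('o, 'p) pstr \<Rightarrow> bool" where
  "elem_equiv M N \<longleftrightarrow> (\<forall>\<phi>. sentence \<phi> \<longrightarrow>
     (psat M (\<lambda>_. 0) (\<lambda>_. 0) \<phi> \<longleftrightarrow> psat N (\<lambda>_. undefined) (\<lambda>_. undefined) \<phi>))"

lemma model_Tpfc_wf: "model_Tpfc k ar K N \<Longrightarrow> wf_pstr k ar N"
  unfolding model_Tpfc_def by (rule conjunct1)

lemma model_Tpfc_limit:
  assumes "model_Tpfc k ar K N"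
  obtains M where "fraisse_limit_pfc k ar K M" "elem_equiv M N"
  using assms[unfolded model_Tpfc_def, THEN conjunct2] that unfolding elem_equiv_def by blast

lemma fraisse_limit_wf: "fraisse_limit_pfc k ar K M \<Longrightarrow> wf_pstr k ar M"
  unfolding fraisse_limit_pfc_def by (rule conjunct1)

lemma fraisse_limit_age:
  assumes "fraisse_limit_pfc k ar K M" "U \<subseteq> OS M" "V \<subseteq> PS M" "finite U" "finite V"
  shows "in_Kpfc k ar K (psub M U V)"
  using assms(1)[unfolded fraisse_limit_pfc_def, THEN conjunct2, THEN conjunct1, rule_format] assms(2-)
  by blast

lemma fraisse_limit_universal:
  assumes "fraisse_limit_pfc k ar K M" "in_Kpfc k ar K (S :: (nat, nat) pstr)"
  obtains fo fp where "pemb S M fo fp"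
  using assms(1)[unfolded fraisse_limit_pfc_def, THEN conjunct2, THEN conjunct2, THEN conjunct1, rule_format]
    assms(2) that by blast

lemma fraisse_limit_homogeneous:
  assumes "fraisse_limit_pfc k ar K M" "U \<subseteq> OS M" "V \<subseteq> PS M" "finite U" "finite V"
    "pemb (psub M U V) M fo fp"
  obtains go gp where "pautom M go gp" "\<forall>u\<in>U. go u = fo u" "\<forall>v\<in>V. gp v = fp v"
proof -
  have "U \<subseteq> OS M \<and> V \<subseteq> PS M \<and> finite U \<and> finite V \<and> pemb (psub M U V) M fo fp"
    using assms(2-) by blast
  then have "\<exists>go gp. pautom M go gp \<and> (\<forall>u\<in>U. go u = fo u) \<and> (\<forall>v\<in>V. gp v = fp v)"
    by (rule assms(1)[unfolded fraisse_limit_pfc_def, THEN conjunct2, THEN conjunct2, THEN conjunct2,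
          rule_format])
  then show ?thesis using that by blast
qed

lemma elem_equiv_ex_assignment:
  assumes "elem_equiv M N" "finite VO" "finite VP" "freeO p \<subseteq> VO" "freeP p \<subseteq> VP"
  shows "(\<exists>vo vp. in_carriers N vo vp VO VP \<and> psat N vo vp p) \<longleftrightarrow>
    (\<exists>vo vp. in_carriers M vo vp VO VP \<and> psat M vo vp p)"
proof -
  obtain xs where xs: "set xs = VO" using assms(2) finite_list by blast
  obtain zs where zs: "set zs = VP" using assms(3) finite_list by blast
  have fr: "freeO p \<subseteq> set xs" "freeP p \<subseteq> set zs" using assms(4,5) xs zs by simp_all
  then have "sentence (exOs xs (exPs zs p))" unfolding sentence_def by auto
  then have "psat M (\<lambda>_. 0) (\<lambda>_. 0) (exOs xs (exPs zs p)) \<longleftrightarrow>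
      psat N (\<lambda>_. undefined) (\<lambda>_. undefined) (exOs xs (exPs zs p))"
    by (rule assms(1)[unfolded elem_equiv_def, rule_format])
  then show ?thesis
    unfolding xs[symmetric] zs[symmetric]
      psat_existential_closure[OF fr, of M "\<lambda>_. 0" "\<lambda>_. 0", symmetric]
      psat_existential_closure[OF fr, of N "\<lambda>_. undefined" "\<lambda>_. undefined", symmetric]
    by (rule sym)
qed

lemma limit_same_qftp_automorphism:
  assumes FL: "fraisse_limit_pfc k ar K M"
    and same: "same_qftp M vo vp M vo' vp' VO VP"
    and car: "in_carriers M vo vp VO VP" and car': "in_carriers M vo' vp' VO VP"
    and fin: "finite VO" "finite VP"
  obtains go gp where "pautom M go gp" "\<forall>l\<in>VO. go (vo l) = vo' l" "\<forall>z\<in>VP. gp (vp z) = vp' z"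
proof -
  obtain fo fp where f: "partial_iso M M (vo ` VO) (vp ` VP) fo fp"
    "\<forall>l\<in>VO. fo (vo l) = vo' l" "\<forall>z\<in>VP. fp (vp z) = vp' z"
    using same_qftp_partial_iso[OF same car'] by blast
  have "vo ` VO \<subseteq> OS M" "vp ` VP \<subseteq> PS M" using car unfolding in_carriers_def by auto
  moreover have "finite (vo ` VO)" "finite (vp ` VP)" using fin by simp_all
  moreover have "pemb (psub M (vo ` VO) (vp ` VP)) M fo fp"
    using f(1) unfolding pemb_def psub_def partial_iso_def by auto
  ultimately obtain go gp where "pautom M go gp" "\<forall>u\<in>vo ` VO. go u = fo u" "\<forall>v\<in>vp ` VP. gp v = fp v"
    by (rule fraisse_limit_homogeneous[OF FL])
  then show ?thesis using f that by auto
qed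

text \<open>The existential closure of the quantifier-free diagram conjoined with \<open>\<phi>\<close> is a sentence
  true in N and hence in M.\<close>
lemma realize_formula_in_limit:
  assumes wfN: "wf_pstr k ar N" and FL: "fraisse_limit_pfc k ar K M" and EE: "elem_equiv M N"
    and car: "in_carriers N vo vp VO VP" and fin: "finite VO" "finite VP"
    and sat: "psat N vo vp \<phi>" and fr: "freeO \<phi> \<subseteq> VO" "freeP \<phi> \<subseteq> VP"
  obtains vo' vp' where "in_carriers M vo' vp' VO VP" "same_qftp N vo vp M vo' vp' VO VP"
    "psat M vo' vp' \<phi>"
proof -
  have wfM: "wf_pstr k ar M" using FL by (rule fraisse_limit_wf)
  obtain xs where xs: "set xs = VO" using fin(1) finite_list by blast
  obtain zs where zs: "set zs = VP" using fin(2) finite_list by blast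
  define p where "p = Conj (qf_diagram k ar N vo vp xs zs) \<phi>"
  have frp: "freeO p \<subseteq> VO" "freeP p \<subseteq> VP"
    using fr freeO_qf_diagram[of k ar N vo vp xs zs] freeP_qf_diagram[of k ar N vo vp xs zs]
    unfolding p_def xs zs by auto
  have "psat N vo vp p" unfolding p_def using sat psat_qf_diagram[OF wfN wfN] same_qftp_refl by simp
  then obtain vo' vp' where "in_carriers M vo' vp' VO VP" "psat M vo' vp' p"
    using elem_equiv_ex_assignment[OF EE fin frp] car by blast
  then show ?thesis using that psat_qf_diagram[OF wfN wfM] xs zs unfolding p_def by auto
qed

lemma realize_in_limit:
  assumes "wf_pstr k ar N" "fraisse_limit_pfc k ar K M" "elem_equiv M N"
    and "in_carriers N vo vp VO VP" "finite VO" "finite VP"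
  obtains vo' vp' where "in_carriers M vo' vp' VO VP" "same_qftp N vo vp M vo' vp' VO VP"
proof -
  obtain vo' vp' where "in_carriers M vo' vp' VO VP" "same_qftp N vo vp M vo' vp' VO VP"
    "psat M vo' vp' (conjs [])"
    by (rule realize_formula_in_limit[OF assms, where \<phi>="conjs []"]) simp_all
  with that show ?thesis by blast
qed

text \<open>Copy the assignment together with \<open>\<phi>\<close> into M, then move the copy onto the target by an
  automorphism of M.\<close>
lemma psat_transfer:
  assumes wfN: "wf_pstr k ar N" and FL: "fraisse_limit_pfc k ar K M" and EE: "elem_equiv M N"
    and same: "same_qftp N vo vp M vo' vp' VO VP"
    and car: "in_carriers N vo vp VO VP" and car': "in_carriers M vo' vp' VO VP"
    and fin: "finite VO" "finite VP" and fr: "freeO \<phi> \<subseteq> VO" "freeP \<phi> \<subseteq> VP"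
    and sat: "psat N vo vp \<phi>"
  shows "psat M vo' vp' \<phi>"
proof -
  obtain wo wp where w: "in_carriers M wo wp VO VP" "same_qftp N vo vp M wo wp VO VP"
    "psat M wo wp \<phi>"
    by (rule realize_formula_in_limit[OF wfN FL EE car fin sat fr])
  have "same_qftp M wo wp M vo' vp' VO VP"
    using same_qftp_trans[OF same_qftp_sym[OF w(2)] same] .
  then obtain go gp where g: "pautom M go gp" "\<forall>l\<in>VO. go (wo l) = vo' l" "\<forall>z\<in>VP. gp (wp z) = vp' z"
    by (rule limit_same_qftp_automorphism[OF FL _ w(1) car' fin])
  have "\<forall>l\<in>freeO \<phi>. wo l \<in> OS M" "\<forall>z\<in>freeP \<phi>. wp z \<in> PS M"
    using w(1) fr unfolding in_carriers_def by auto
  then have "psat M (go \<circ> wo) (gp \<circ> wp) \<phi>" using psat_pautom[OF g(1)] w(3) by blast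
  moreover have "psat M (go \<circ> wo) (gp \<circ> wp) \<phi> \<longleftrightarrow> psat M vo' vp' \<phi>"
    using g fr by (intro psat_cong) auto
  ultimately show ?thesis by simp
qed

lemma psat_transfer_iff:
  assumes "wf_pstr k ar N" "fraisse_limit_pfc k ar K M" "elem_equiv M N"
    "same_qftp N vo vp M vo' vp' VO VP" "in_carriers N vo vp VO VP" "in_carriers M vo' vp' VO VP"
    "finite VO" "finite VP" "freeO \<phi> \<subseteq> VO" "freeP \<phi> \<subseteq> VP"
  shows "psat N vo vp \<phi> \<longleftrightarrow> psat M vo' vp' \<phi>"
proof -
  have "psat N vo vp \<phi> \<Longrightarrow> psat M vo' vp' \<phi>" by (rule psat_transfer[OF assms])
  moreover have "psat N vo vp (Neg \<phi>) \<Longrightarrow> psat M vo' vp' (Neg \<phi>)"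
    by (rule psat_transfer[OF assms(1-8)]) (use assms(9,10) in simp_all)
  ultimately show ?thesis by auto
qed

lemma extend_same_qftp_from_limit:
  assumes wfN: "wf_pstr k ar N" and FL: "fraisse_limit_pfc k ar K M" and EE: "elem_equiv M N"
    and same: "same_qftp N vo vp M wo wp VO VP"
    and car: "in_carriers N vo vp VO VP" and car': "in_carriers M wo wp VO VP"
    and fin: "finite VO" "finite VP" and x: "x \<notin> VO" and cM: "cM \<in> OS M"
  obtains c where "c \<in> OS N" "same_qftp N (vo(x := c)) vp M (wo(x := cM)) wp (insert x VO) VP"
proof -
  have wfM: "wf_pstr k ar M" using FL by (rule fraisse_limit_wf)
  obtain xs where xs: "set xs = VO" using fin(1) finite_list by blast
  obtain zs where zs: "set zs = VP" using fin(2) finite_list by blast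
  define \<psi> where "\<psi> = ExO x (qf_diagram k ar M (wo(x := cM)) wp (x # xs) zs)"
  have fr: "freeO \<psi> \<subseteq> VO" "freeP \<psi> \<subseteq> VP"
    using freeO_qf_diagram[of k ar M "wo(x := cM)" wp "x # xs" zs]
      freeP_qf_diagram[of k ar M "wo(x := cM)" wp "x # xs" zs]
    unfolding \<psi>_def using xs zs by auto
  have "psat M (wo(x := cM)) wp (qf_diagram k ar M (wo(x := cM)) wp (x # xs) zs)"
    using psat_qf_diagram[OF wfM wfM] same_qftp_refl by blast
  then have "psat M wo wp \<psi>" unfolding \<psi>_def using cM by auto
  then have "psat N vo vp \<psi>" using psat_transfer_iff[OF wfN FL EE same car car' fin fr] by blast
  then obtain c where c: "c \<in> OS N"
    and "psat N (vo(x := c)) vp (qf_diagram k ar M (wo(x := cM)) wp (x # xs) zs)"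
    unfolding \<psi>_def by auto
  then have "same_qftp M (wo(x := cM)) wp N (vo(x := c)) vp (set (x # xs)) (set zs)"
    using psat_qf_diagram[OF wfM wfN] by blast
  then show ?thesis using that[OF c] same_qftp_sym unfolding list.set xs zs by blast
qed

lemma model_psat_same_qftp:
  assumes N: "model_Tpfc k ar K N"
    and same: "same_qftp N vo vp N vo' vp' VO VP"
    and car: "in_carriers N vo vp VO VP" and car': "in_carriers N vo' vp' VO VP"
    and fin: "finite VO" "finite VP" and fr: "freeO \<phi> \<subseteq> VO" "freeP \<phi> \<subseteq> VP"
  shows "psat N vo vp \<phi> \<longleftrightarrow> psat N vo' vp' \<phi>"
proof -
  have wfN: "wf_pstr k ar N" using N by (rule model_Tpfc_wf)
  obtain M where FL: "fraisse_limit_pfc k ar K M" and EE: "elem_equiv M N"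
    using N by (rule model_Tpfc_limit)
  obtain wo wp where w: "in_carriers M wo wp VO VP" "same_qftp N vo' vp' M wo wp VO VP"
    by (rule realize_in_limit[OF wfN FL EE car' fin])
  have "psat N vo vp \<phi> \<longleftrightarrow> psat M wo wp \<phi>"
    using psat_transfer_iff[OF wfN FL EE same_qftp_trans[OF same w(2)] car w(1) fin fr] .
  also have "\<dots> \<longleftrightarrow> psat N vo' vp' \<phi>"
    using psat_transfer_iff[OF wfN FL EE w(2) car' w(1) fin fr] by simp
  finally show ?thesis .
qed

section \<open>Strong amalgamation in the fibers\<close>

lemma fraisse_class_wf:
  assumes "fraisse_class k ar K" "S \<in> K"
  shows "wf_str k ar S"
  using assms(1)[unfolded fraisse_class_def, THEN conjunct2, THEN conjunct1, rule_format, OF assms(2)]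
  by (rule conjunct2)

lemma fraisse_class_iso_closed:
  assumes "fraisse_class k ar K" "S \<in> K" "wf_str k ar S'" "isomorphic_str S S'"
  shows "S' \<in> K"
  by (rule assms(1)[unfolded fraisse_class_def, THEN conjunct2, THEN conjunct2, THEN conjunct1,
        rule_format, OF assms(2) conjI[OF assms(3,4)]])

lemma fraisse_class_hereditary:
  assumes "fraisse_class k ar K" "S \<in> K" "U \<subseteq> fst S"
  shows "substr S U \<in> K"
  by (rule assms(1)[unfolded fraisse_class_def, THEN conjunct2, THEN conjunct2, THEN conjunct2,
        THEN conjunct1, rule_format, OF assms(2,3)])

lemma SAP_amalgam:
  assumes "SAP K" "A \<in> K" "B \<in> K" "C \<in> K" "emb_str A B e" "emb_str A C f"
  obtains D g h where "D \<in> K" "emb_str B D g" "emb_str C D h" "\<forall>x\<in>fst A. g (e x) = h (f x)"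
    "g ` fst B \<inter> h ` fst C = (g \<circ> e) ` fst A"
proof -
  have "\<exists>D\<in>K. \<exists>g h. emb_str B D g \<and> emb_str C D h \<and> (\<forall>x\<in>fst A. g (e x) = h (f x)) \<and>
      g ` fst B \<inter> h ` fst C = (g \<circ> e) ` fst A"
    by (rule assms(1)[unfolded SAP_def, rule_format, OF assms(2-4) conjI[OF assms(5,6)]])
  then obtain D g h where "D \<in> K" "emb_str B D g" "emb_str C D h" "\<forall>x\<in>fst A. g (e x) = h (f x)"
    "g ` fst B \<inter> h ` fst C = (g \<circ> e) ` fst A"
    by blast
  then show ?thesis by (rule that)
qed

lemma isomorphic_str_refl: "isomorphic_str S S"
  unfolding isomorphic_str_def emb_str_def by (intro exI[of _ id]) simp

lemma isomorphic_str_sym: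
  assumes "isomorphic_str S S'"
  shows "isomorphic_str S' S"
proof -
  obtain f where f: "emb_str S S' f" "f ` fst S = fst S'"
    using assms unfolding isomorphic_str_def by blast
  have inj: "inj_on f (fst S)" using f(1) unfolding emb_str_def by blast
  define g where "g = the_inv_into (fst S) f"
  have g_onto: "g ` fst S' = fst S"
    unfolding g_def using the_inv_into_onto[OF inj] f(2) by simp
  have fg: "f (g y) = y" if "y \<in> fst S'" for y
    unfolding g_def using f_the_inv_into_f[OF inj] that f(2) by simp
  have "snd S' i xs \<longleftrightarrow> snd S i (map g xs)" if "set xs \<subseteq> fst S'" for i xs
  proof -
    have "set (map g xs) \<subseteq> fst S" using g_onto that by auto
    then have "snd S i (map g xs) \<longleftrightarrow> snd S' i (map f (map g xs))"
      using f(1) unfolding emb_str_def by blast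
    moreover have "map f (map g xs) = xs" using fg that by (induction xs) auto
    ultimately show ?thesis by simp
  qed
  moreover have "inj_on g (fst S')"
    unfolding g_def using inj_on_the_inv_into[OF inj] f(2) by simp
  ultimately have "emb_str S' S g" unfolding emb_str_def using g_onto by auto
  then show ?thesis unfolding isomorphic_str_def using g_onto by blast
qed

lemma limit_fiber_in_K:
  assumes FC: "fraisse_class k ar K" and FL: "fraisse_limit_pfc k ar K M"
    and U: "finite U" "U \<subseteq> OS M" and b: "b \<in> PS M"
  shows "substr (fiber M b) U \<in> K"
proof -
  have "in_Kpfc k ar K (psub M U {b})" using fraisse_limit_age[OF FL U(2) _ U(1)] b by simp
  then obtain S where S: "S \<in> K" "isomorphic_str (fiber (psub M U {b}) b) S"
    unfolding in_Kpfc_def psub_def by auto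
  moreover have "fiber (psub M U {b}) b = substr (fiber M b) U"
    unfolding fiber_def psub_def substr_def by auto
  moreover have "wf_str k ar (substr (fiber M b) U)"
    using fraisse_limit_wf[OF FL] unfolding wf_str_def wf_pstr_def substr_def fiber_def by auto
  ultimately show ?thesis using fraisse_class_iso_closed[OF FC] isomorphic_str_sym by metis
qed

text \<open>c and c' have the same quantifier-free type over A in the fiber at b, up to equalities
  with elements of A.\<close>
definition swap_preserves_fiber :: "('o, 'p) pstr \<Rightarrow> 'p \<Rightarrow> 'o set \<Rightarrow> 'o \<Rightarrow> 'o \<Rightarrow> bool" where
  "swap_preserves_fiber S b A c c' \<longleftrightarrow> (\<forall>i ys. set ys \<subseteq> insert c A \<longrightarrow>
     (PR S i b ys \<longleftrightarrow> PR S i b (map (\<lambda>x. if x = c then c' else x) ys)))"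

text \<open>Strongly amalgamate the fiber at b over X with the fiber at b over A \<union> {c}, over the fiber
  over A; strongness makes the image of c a point outside the image of X.\<close>
lemma fiber_one_point_extension:
  assumes FC: "fraisse_class k ar K" and SAP: "SAP K" and FL: "fraisse_limit_pfc k ar K M"
    and X: "finite X" "X \<subseteq> OS M" and b: "b \<in> PS M" and A: "A \<subseteq> X"
    and c: "c \<in> OS M" "c \<notin> A" and new: "new \<notin> X"
  obtains R where "(insert new X, R) \<in> K"
    "\<forall>i ys. set ys \<subseteq> X \<longrightarrow> (R i ys \<longleftrightarrow> PR M i b ys)"
    "\<forall>i ys. set ys \<subseteq> insert c A \<longrightarrow> (R i (map (\<lambda>x. if x = c then new else x) ys) \<longleftrightarrow> PR M i b ys)"
proof -
  let ?F = "fiber M b"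
  have finA: "finite A" "A \<subseteq> OS M" using A X finite_subset by blast+
  have "substr ?F (insert c A) \<in> K" using finA c by (intro limit_fiber_in_K[OF FC FL _ _ b]) auto
  moreover have "emb_str (substr ?F A) (substr ?F X) id" "emb_str (substr ?F A) (substr ?F (insert c A)) id"
    unfolding emb_str_def substr_def using A by auto
  ultimately obtain D g h where D: "D \<in> K" and g: "emb_str (substr ?F X) D g"
    and h: "emb_str (substr ?F (insert c A)) D h" and gh': "\<forall>x\<in>fst (substr ?F A). g (id x) = h (id x)"
    and strong': "g ` fst (substr ?F X) \<inter> h ` fst (substr ?F (insert c A)) = (g \<circ> id) ` fst (substr ?F A)"
    by (rule SAP_amalgam[OF SAP limit_fiber_in_K[OF FC FL finA b] limit_fiber_in_K[OF FC FL X b]])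
  have gh: "\<forall>x\<in>A. g x = h x" and strong: "g ` X \<inter> h ` insert c A = g ` A"
    using gh' strong' unfolding substr_def by simp_all
  define \<pi> where "\<pi> x = (if x = new then h c else g x)" for x
  define R where "R i ys \<longleftrightarrow> set ys \<subseteq> insert new X \<and> snd D i (map \<pi> ys)" for i ys
  have \<pi>_X: "\<pi> x = g x" if "x \<in> X" for x using that new unfolding \<pi>_def by auto
  have "inj_on h (insert c A)" using h unfolding emb_str_def substr_def by simp
  have "h c \<notin> g ` X"
  proof
    assume "h c \<in> g ` X"
    then have "h c \<in> g ` X \<inter> h ` insert c A" by simp
    then obtain a where a: "a \<in> A" "h c = g a" unfolding strong by blast
    then have "h c = h a" using gh by simp
    then have "c = a" using inj_on_eq_iff[OF \<open>inj_on h (insert c A)\<close>] a(1) by simp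
    then show False using a(1) c(2) by simp
  qed
  moreover have "\<pi> ` X = g ` X" using \<pi>_X by (rule image_cong[OF refl])
  moreover have "inj_on \<pi> X"
  proof -
    have "inj_on g X" using g unfolding emb_str_def substr_def by simp
    moreover have "inj_on \<pi> X = inj_on g X" using \<pi>_X by (rule inj_on_cong)
    ultimately show ?thesis by simp
  qed
  moreover have "X - {new} = X" using new by blast
  moreover have "\<pi> new = h c" unfolding \<pi>_def by simp
  ultimately have inj: "inj_on \<pi> (insert new X)" unfolding inj_on_insert by simp
  have "\<pi> ` insert new X \<subseteq> fst D"
    using g h \<pi>_X unfolding emb_str_def substr_def \<pi>_def by auto
  then have "substr D (\<pi> ` insert new X) \<in> K" by (rule fraisse_class_hereditary[OF FC D])
  moreover have "wf_str k ar (insert new X, R)"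
    unfolding wf_str_def
  proof (intro allI impI)
    fix i ys assume "snd (insert new X, R) i ys"
    then have "set ys \<subseteq> insert new X" "snd D i (map \<pi> ys)" unfolding R_def by simp_all
    then show "i < k \<and> length ys = ar i \<and> set ys \<subseteq> fst (insert new X, R)"
      using fraisse_class_wf[OF FC D] unfolding wf_str_def by (metis fst_conv length_map)
  qed
  moreover have "isomorphic_str (substr D (\<pi> ` insert new X)) (insert new X, R)"
  proof (rule isomorphic_str_sym)
    have "emb_str (insert new X, R) (substr D (\<pi> ` insert new X)) \<pi>"
      using inj unfolding emb_str_def substr_def R_def by auto
    then show "isomorphic_str (insert new X, R) (substr D (\<pi> ` insert new X))"
      unfolding isomorphic_str_def substr_def by auto
  qed
  ultimately have "(insert new X, R) \<in> K" by (rule fraisse_class_iso_closed[OF FC])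
  moreover have "\<forall>i ys. set ys \<subseteq> X \<longrightarrow> (R i ys \<longleftrightarrow> PR M i b ys)"
  proof (intro allI impI)
    fix i ys assume ys: "set ys \<subseteq> X"
    have eq: "map \<pi> ys = map g ys" using ys \<pi>_X by auto
    have "R i ys \<longleftrightarrow> snd D i (map g ys)" using ys unfolding R_def eq by auto
    then show "R i ys \<longleftrightarrow> PR M i b ys"
      using g ys unfolding emb_str_def substr_def fiber_def by auto
  qed
  moreover have "\<forall>i ys. set ys \<subseteq> insert c A \<longrightarrow> (R i (map (\<lambda>x. if x = c then new else x) ys) \<longleftrightarrow> PR M i b ys)"
  proof (intro allI impI)
    fix i ys assume ys: "set ys \<subseteq> insert c A"
    have eq: "map \<pi> (map (\<lambda>x. if x = c then new else x) ys) = map h ys"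
      using ys gh A new \<pi>_X unfolding \<pi>_def by auto
    have "set (map (\<lambda>x. if x = c then new else x) ys) \<subseteq> insert new X" using ys A by auto
    then have "R i (map (\<lambda>x. if x = c then new else x) ys) \<longleftrightarrow> snd D i (map h ys)"
      unfolding R_def eq by blast
    then show "R i (map (\<lambda>x. if x = c then new else x) ys) \<longleftrightarrow> PR M i b ys"
      using h ys unfolding emb_str_def substr_def fiber_def by auto
  qed
  ultimately show ?thesis by (rule that)
qed

lemma pemb_comp:
  assumes f: "pemb S T fo fp" and g: "pemb T U go gp"
  shows "pemb S U (go \<circ> fo) (gp \<circ> fp)"
proof -
  have "inj_on go (fo ` OS S)" "inj_on gp (fp ` PS S)"
    using f g unfolding pemb_def by (auto intro: inj_on_subset)
  then have "inj_on (go \<circ> fo) (OS S)" "inj_on (gp \<circ> fp) (PS S)"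
    using f unfolding pemb_def by (auto intro: comp_inj_on)
  moreover have "(go \<circ> fo) ` OS S \<subseteq> OS U" "(gp \<circ> fp) ` PS S \<subseteq> PS U"
    using f g unfolding pemb_def by (fastforce simp: image_subset_iff)+
  moreover have "PR S i v ys \<longleftrightarrow> PR U i ((gp \<circ> fp) v) (map (go \<circ> fo) ys)"
    if "v \<in> PS S" "set ys \<subseteq> OS S" for i v ys
  proof -
    have "fp v \<in> PS T" "set (map fo ys) \<subseteq> OS T" using f that unfolding pemb_def by auto
    then have "PR T i (fp v) (map fo ys) \<longleftrightarrow> PR U i (gp (fp v)) (map go (map fo ys))"
      using g unfolding pemb_def by blast
    moreover have "PR S i v ys \<longleftrightarrow> PR T i (fp v) (map fo ys)"
      using f that unfolding pemb_def by blast
    ultimately show ?thesis by simp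
  qed
  ultimately show ?thesis unfolding pemb_def by blast
qed

lemma pemb_psub_inverse:
  assumes f: "pemb (psub M U V) M fo fp" and UV: "U \<subseteq> OS M" "V \<subseteq> PS M"
  shows "pemb (psub M (fo ` U) (fp ` V)) M (the_inv_into U fo) (the_inv_into V fp)"
proof -
  have injo: "inj_on fo U" and injp: "inj_on fp V"
    using f unfolding pemb_def psub_def by simp_all
  have rel: "PR M i (fp v) (map fo xs) \<longleftrightarrow> PR M i v xs" if "v \<in> V" "set xs \<subseteq> U" for i v xs
    using f that unfolding pemb_def psub_def by auto
  have "PR (psub M (fo ` U) (fp ` V)) i v' ys \<longleftrightarrow>
      PR M i (the_inv_into V fp v') (map (the_inv_into U fo) ys)"
    if v': "v' \<in> fp ` V" and ys: "set ys \<subseteq> fo ` U" for i v' ys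
  proof -
    obtain v where v: "v \<in> V" "v' = fp v" using v' by blast
    have "ys \<in> lists (fo ` U)" using ys by blast
    then obtain xs where xs: "set xs \<subseteq> U" "ys = map fo xs" unfolding lists_image by blast
    have "map (the_inv_into U fo) ys = xs"
      using xs the_inv_into_f_f[OF injo] by (induction xs arbitrary: ys) auto
    moreover have "the_inv_into V fp v' = v" using v the_inv_into_f_f[OF injp] by simp
    ultimately show ?thesis using v' ys v xs rel unfolding psub_def by auto
  qed
  moreover have "inj_on (the_inv_into U fo) (fo ` U)" "inj_on (the_inv_into V fp) (fp ` V)"
    using inj_on_the_inv_into[OF injo] inj_on_the_inv_into[OF injp] .
  moreover have "the_inv_into U fo ` fo ` U \<subseteq> OS M" "the_inv_into V fp ` fp ` V \<subseteq> PS M"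
    using the_inv_into_onto[OF injo] the_inv_into_onto[OF injp] UV by simp_all
  ultimately show ?thesis unfolding pemb_def by (simp add: psub_def)
qed

text \<open>Embed E anywhere in M, then move the image of the substructure back onto itself by an
  automorphism extending the inverse partial isomorphism.\<close>
lemma fraisse_limit_extension:
  assumes FL: "fraisse_limit_pfc k ar K M" and E: "in_Kpfc k ar K E"
    and U: "U \<subseteq> OS M" "finite U" and V: "V \<subseteq> PS M" "finite V"
    and incl: "pemb (psub M U V) E id id"
  obtains fo fp where "pemb E M fo fp" "\<forall>u\<in>U. fo u = u" "\<forall>v\<in>V. fp v = v"
proof -
  obtain fo fp where f: "pemb E M fo fp" using fraisse_limit_universal[OF FL E] by blast
  have emb: "pemb (psub M U V) M fo fp" using pemb_comp[OF incl f] by simp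
  then have inv: "pemb (psub M (fo ` U) (fp ` V)) M (the_inv_into U fo) (the_inv_into V fp)"
    by (rule pemb_psub_inverse[OF _ U(1) V(1)])
  have injo: "inj_on fo U" and injp: "inj_on fp V" using emb unfolding pemb_def psub_def by simp_all
  have "fo ` U \<subseteq> OS M" "fp ` V \<subseteq> PS M" using emb unfolding pemb_def psub_def by simp_all
  then obtain go gp where g: "pautom M go gp"
    "\<forall>u\<in>fo ` U. go u = the_inv_into U fo u" "\<forall>v\<in>fp ` V. gp v = the_inv_into V fp v"
    using fraisse_limit_homogeneous[OF FL _ _ _ _ inv] U(2) V(2) by blast
  have "pemb E M (go \<circ> fo) (gp \<circ> fp)" using pemb_comp[OF f] g(1) unfolding pautom_def by blast
  moreover have "\<forall>u\<in>U. (go \<circ> fo) u = u" using g(2) the_inv_into_f_f[OF injo] by simp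
  moreover have "\<forall>v\<in>V. (gp \<circ> fp) v = v" using g(3) the_inv_into_f_f[OF injp] by simp
  ultimately show ?thesis by (rule that)
qed

lemma limit_amalgamation:
  fixes n :: nat
  assumes FC: "fraisse_class k ar K" and SAP: "SAP K" and FL: "fraisse_limit_pfc k ar K M"
    and X: "finite X" "X \<subseteq> OS M" and b: "\<forall>j<n. b j \<in> PS M" "inj_on b {..<n}"
    and A: "\<forall>j<n. A j \<subseteq> X" and c: "\<forall>j<n. c j \<in> OS M \<and> c j \<notin> A j"
  obtains c' where "c' \<in> OS M" "c' \<notin> X" "\<forall>j<n. swap_preserves_fiber M (b j) (A j) (c j) c'"
proof -
  obtain new :: nat where new: "new \<notin> X" using ex_new_if_finite[OF infinite_UNIV_nat X(1)] by blast
  let ?sw = "\<lambda>j x. if x = c j then new else x"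
  let ?P = "\<lambda>j R. (insert new X, R) \<in> K \<and> (\<forall>i ys. set ys \<subseteq> X \<longrightarrow> (R i ys \<longleftrightarrow> PR M i (b j) ys)) \<and>
    (\<forall>i ys. set ys \<subseteq> insert (c j) (A j) \<longrightarrow> (R i (map (?sw j) ys) \<longleftrightarrow> PR M i (b j) ys))"
  have ex_R: "\<exists>R. ?P j R" if j: "j < n" for j
  proof -
    obtain R where "(insert new X, R) \<in> K" "\<forall>i ys. set ys \<subseteq> X \<longrightarrow> (R i ys \<longleftrightarrow> PR M i (b j) ys)"
      "\<forall>i ys. set ys \<subseteq> insert (c j) (A j) \<longrightarrow> (R i (map (?sw j) ys) \<longleftrightarrow> PR M i (b j) ys)"
      by (rule fiber_one_point_extension[OF FC SAP FL X, of "b j" "A j" "c j" new])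
        (use b(1) A c new j in simp_all)
    then show ?thesis by (intro exI[of _ R] conjI)
  qed
  define R where "R j = (SOME R. ?P j R)" for j
  have R: "?P j (R j)" if "j < n" for j
    unfolding R_def by (rule someI_ex[of "?P j", OF ex_R[OF that]])
  have RK: "(insert new X, R j) \<in> K" if "j < n" for j using R[OF that] by blast
  have RX: "R j i ys \<longleftrightarrow> PR M i (b j) ys" if "j < n" "set ys \<subseteq> X" for i j ys
    using R[OF that(1)] that(2) by blast
  have Rsw: "R j i (map (?sw j) ys) \<longleftrightarrow> PR M i (b j) ys" if "j < n" "set ys \<subseteq> insert (c j) (A j)" for i j ys
    using R[OF that(1)] that(2) by blast
  txt \<open>The one-point extensions at the pairwise distinct b j fit together into one finite
    two-sorted structure over X; its new point, embedded into M over X, is the required c'.\<close>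
  define E :: "(nat, nat) pstr" where
    "E = \<lparr>OS = insert new X, PS = b ` {..<n}, PR = (\<lambda>i v ys. \<exists>j<n. v = b j \<and> R j i ys)\<rparr>"
  have PR_E: "PR E i (b j) ys \<longleftrightarrow> R j i ys" if "j < n" for i j ys
    using that inj_on_eq_iff[OF b(2)] unfolding E_def by auto
  have fiber_E: "fiber E (b j) = (insert new X, R j)" if "j < n" for j
    using PR_E[OF that] unfolding fiber_def by (simp add: E_def fun_eq_iff)
  have EK: "in_Kpfc k ar K E"
    unfolding in_Kpfc_def
  proof (intro conjI ballI)
    show "finite (OS E)" "finite (PS E)" unfolding E_def by (simp_all add: X(1))
    show "\<exists>S\<in>K. isomorphic_str (fiber E v) S" if v: "v \<in> PS E" for v
    proof -
      obtain j where "j < n" "v = b j" using v unfolding E_def by auto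
      then have "fiber E v \<in> K" using RK fiber_E by simp
      then show ?thesis using isomorphic_str_refl by blast
    qed
    show "wf_pstr k ar E"
      unfolding wf_pstr_def
    proof (intro allI impI)
      fix i v ys assume "PR E i v ys"
      then obtain j where j: "j < n" "v = b j" "R j i ys" unfolding E_def by auto
      have "wf_str k ar (insert new X, R j)" using fraisse_class_wf[OF FC RK[OF j(1)]] .
      then show "i < k \<and> v \<in> PS E \<and> length ys = ar i \<and> set ys \<subseteq> OS E"
        using j unfolding wf_str_def E_def by auto
    qed
  qed
  have incl: "pemb (psub M X (b ` {..<n})) E id id"
    unfolding pemb_def
  proof (intro conjI allI ballI impI)
    fix i v ys assume "v \<in> PS (psub M X (b ` {..<n}))" and "set ys \<subseteq> OS (psub M X (b ` {..<n}))"
    then obtain j where j: "j < n" "v = b j" and ys: "set ys \<subseteq> X" unfolding psub_def by auto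
    have "PR (psub M X (b ` {..<n})) i v ys \<longleftrightarrow> PR M i (b j) ys" using j ys unfolding psub_def by auto
    also have "\<dots> \<longleftrightarrow> PR E i (id v) (map id ys)" using RX[OF j(1) ys] PR_E[OF j(1)] j(2) by simp
    finally show "PR (psub M X (b ` {..<n})) i v ys \<longleftrightarrow> PR E i (id v) (map id ys)" .
  qed (auto simp: psub_def E_def)
  have "b ` {..<n} \<subseteq> PS M" using b(1) by auto
  then obtain fo fp where f: "pemb E M fo fp" "\<forall>u\<in>X. fo u = u" "\<forall>v\<in>b ` {..<n}. fp v = v"
    by (rule fraisse_limit_extension[OF FL EK X(2,1) _ _ incl]) simp
  have injo: "inj_on fo (insert new X)" and fo_new: "fo new \<in> OS M"
    using f(1) unfolding pemb_def E_def by auto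
  have "fo new \<notin> X"
  proof
    assume "fo new \<in> X"
    then have "fo (fo new) = fo new" using f(2) by simp
    then show False using inj_on_eq_iff[OF injo] \<open>fo new \<in> X\<close> new by auto
  qed
  moreover have "swap_preserves_fiber M (b j) (A j) (c j) (fo new)" if j: "j < n" for j
    unfolding swap_preserves_fiber_def
  proof (intro allI impI)
    fix i ys assume ys: "set ys \<subseteq> insert (c j) (A j)"
    have sw: "set (map (?sw j) ys) \<subseteq> insert new X" using ys A j by auto
    have "PR M i (b j) ys \<longleftrightarrow> PR E i (b j) (map (?sw j) ys)" using Rsw[OF j ys] PR_E[OF j] by simp
    also have "\<dots> \<longleftrightarrow> PR M i (fp (b j)) (map fo (map (?sw j) ys))"
      using f(1) sw j unfolding pemb_def E_def by auto
    also have "map fo (map (?sw j) ys) = map (\<lambda>x. if x = c j then fo new else x) ys"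
      using ys A j f(2) by auto
    also have "fp (b j) = b j" using f(3) j by simp
    finally show "PR M i (b j) ys \<longleftrightarrow> PR M i (b j) (map (\<lambda>x. if x = c j then fo new else x) ys)" .
  qed
  ultimately show ?thesis using that fo_new by blast
qed

lemma partial_iso_swap_preserves_fiber:
  assumes iso: "partial_iso S T U V fo fp" and sub: "insert c (insert c' A) \<subseteq> U" and b: "b \<in> V"
    and swap: "swap_preserves_fiber T (fp b) (fo ` A) (fo c) (fo c')"
  shows "swap_preserves_fiber S b A c c'"
  unfolding swap_preserves_fiber_def
proof (intro allI impI)
  fix i ys assume ys: "set ys \<subseteq> insert c A"
  let ?sw = "\<lambda>x. if x = c then c' else x"
  have inj: "inj_on fo U" and rel: "\<And>ys. set ys \<subseteq> U \<Longrightarrow> PR S i b ys \<longleftrightarrow> PR T i (fp b) (map fo ys)"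
    using iso b unfolding partial_iso_def by auto
  have eq: "map fo (map ?sw ys) = map (\<lambda>x. if x = fo c then fo c' else x) (map fo ys)"
    using ys sub inj_on_eq_iff[OF inj] by auto
  have U: "set ys \<subseteq> U" "set (map ?sw ys) \<subseteq> U" using ys sub by auto
  have "PR S i b ys \<longleftrightarrow> PR T i (fp b) (map fo ys)" using rel[OF U(1)] .
  also have "\<dots> \<longleftrightarrow> PR T i (fp b) (map (\<lambda>x. if x = fo c then fo c' else x) (map fo ys))"
    by (rule swap[unfolded swap_preserves_fiber_def, rule_format]) (use ys in auto)
  also have "\<dots> \<longleftrightarrow> PR S i b (map ?sw ys)" unfolding eq[symmetric] using rel[OF U(2)] by simp
  finally show "PR S i b ys \<longleftrightarrow> PR S i b (map ?sw ys)" .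
qed

text \<open>Copy the configuration into M, amalgamate there, and pull the new point back to N along
  the existential quantifier-free diagram.\<close>
lemma model_amalgamation:
  fixes n :: nat
  assumes FC: "fraisse_class k ar K" and SAP: "SAP K" and N: "model_Tpfc k ar K N"
    and X: "finite X" "X \<subseteq> OS N" and b: "\<forall>j<n. b j \<in> PS N" "inj_on b {..<n}"
    and A: "\<forall>j<n. A j \<subseteq> X" and c: "\<forall>j<n. c j \<in> OS N \<and> c j \<notin> A j"
  obtains c' where "c' \<in> OS N" "c' \<notin> X" "\<forall>j<n. swap_preserves_fiber N (b j) (A j) (c j) c'"
proof -
  have wfN: "wf_pstr k ar N" using N by (rule model_Tpfc_wf)
  obtain M where FL: "fraisse_limit_pfc k ar K M" and EE: "elem_equiv M N"
    using N by (rule model_Tpfc_limit)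
  define Z where "Z = X \<union> c ` {..<n}"
  have ZN: "Z \<subseteq> OS N" using X(2) c unfolding Z_def by auto
  have "finite Z" unfolding Z_def using X(1) by simp
  then obtain xs where xs: "set xs = Z" using finite_list by blast
  define m where "m = length xs"
  have Z_nth: "(!) xs ` {..<m} = Z" unfolding m_def xs[symmetric] by (auto simp: in_set_conv_nth)
  have carN: "in_carriers N ((!) xs) b {..<m} {..<n}"
    using Z_nth ZN b(1) unfolding in_carriers_def by auto
  obtain wo wp where carM: "in_carriers M wo wp {..<m} {..<n}"
    and same: "same_qftp N ((!) xs) b M wo wp {..<m} {..<n}"
    by (rule realize_in_limit[OF wfN FL EE carN]) simp_all
  obtain fo fp where iso0: "partial_iso N M ((!) xs ` {..<m}) (b ` {..<n}) fo fp"
    and fo: "\<forall>l\<in>{..<m}. fo (xs ! l) = wo l" and fp: "\<forall>j\<in>{..<n}. fp (b j) = wp j"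
    by (rule same_qftp_partial_iso[OF same carM])
  have iso: "partial_iso N M Z (b ` {..<n}) fo fp" using iso0 unfolding Z_nth .
  then have injo: "inj_on fo Z" and injp: "inj_on fp (b ` {..<n})"
    and foZ: "fo ` Z \<subseteq> OS M" and fpB: "fp ` b ` {..<n} \<subseteq> PS M"
    unfolding partial_iso_def by simp_all
  have "fo ` X \<subseteq> OS M" using foZ unfolding Z_def by auto
  moreover have "\<forall>j<n. (fp \<circ> b) j \<in> PS M" using fpB by auto
  moreover have "inj_on (fp \<circ> b) {..<n}" using comp_inj_on[OF b(2) injp] .
  moreover have "\<forall>j<n. fo ` A j \<subseteq> fo ` X" using A by auto
  moreover have "\<forall>j<n. fo (c j) \<in> OS M \<and> fo (c j) \<notin> fo ` A j"
  proof (intro allI impI conjI)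
    fix j assume j: "j < n"
    then have "c j \<in> Z" "A j \<subseteq> Z" using A unfolding Z_def by auto
    then show "fo (c j) \<in> OS M" "fo (c j) \<notin> fo ` A j"
      using foZ inj_on_image_mem_iff[OF injo] c j by auto
  qed
  ultimately obtain cM where cM: "cM \<in> OS M" "cM \<notin> fo ` X"
    "\<forall>j<n. swap_preserves_fiber M ((fp \<circ> b) j) (fo ` A j) (fo (c j)) cM"
    by (rule limit_amalgamation[OF FC SAP FL finite_imageI[OF X(1)]])
  have "m \<notin> {..<m}" by simp
  then obtain c' where c': "c' \<in> OS N"
    and same': "same_qftp N (((!) xs)(m := c')) b M (wo(m := cM)) wp (insert m {..<m}) {..<n}"
    by (rule extend_same_qftp_from_limit[OF wfN FL EE same carN carM finite_lessThan finite_lessThan _ cM(1)])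
  have "in_carriers M (wo(m := cM)) wp (insert m {..<m}) {..<n}"
    using carM cM(1) unfolding in_carriers_def by auto
  then obtain fo' fp' where iso': "partial_iso N M (((!) xs)(m := c') ` insert m {..<m}) (b ` {..<n}) fo' fp'"
    and fo': "\<forall>l\<in>insert m {..<m}. fo' ((((!) xs)(m := c')) l) = (wo(m := cM)) l"
    and fp': "\<forall>j\<in>{..<n}. fp' (b j) = wp j"
    by (rule same_qftp_partial_iso[OF same'])
  have "((!) xs)(m := c') ` {..<m} = Z" unfolding Z_nth[symmetric] by (rule image_cong) auto
  then have img: "((!) xs)(m := c') ` insert m {..<m} = insert c' Z"
    by (simp only: image_insert fun_upd_same)
  have fo'_c': "fo' c' = cM" using fo'[rule_format, of m] by simp
  have fo'_Z: "fo' z = fo z" if z: "z \<in> Z" for z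
  proof -
    obtain l where "l < m" "z = xs ! l" using z Z_nth by auto
    then show ?thesis using fo fo'[rule_format, of l] by simp
  qed
  have "c' \<notin> X"
  proof
    assume "c' \<in> X"
    then have "cM = fo c'" using fo'_c' fo'_Z unfolding Z_def by auto
    then show False using cM(2) \<open>c' \<in> X\<close> by blast
  qed
  moreover have "\<forall>j<n. swap_preserves_fiber N (b j) (A j) (c j) c'"
  proof (intro allI impI)
    fix j assume j: "j < n"
    have AZ: "A j \<subseteq> Z" "c j \<in> Z" using A j unfolding Z_def by auto
    show "swap_preserves_fiber N (b j) (A j) (c j) c'"
    proof (rule partial_iso_swap_preserves_fiber[OF iso'[unfolded img]])
      show "insert (c j) (insert c' (A j)) \<subseteq> insert c' Z" using AZ by auto
      show "b j \<in> b ` {..<n}" using j by simp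
      have "fo' ` A j = fo ` A j" using AZ(1) fo'_Z by (intro image_cong) auto
      moreover have "fo' (c j) = fo (c j)" using AZ(2) fo'_Z by simp
      moreover have "fp' (b j) = fp (b j)" using fp fp' j by simp
      ultimately show "swap_preserves_fiber M (fp' (b j)) (fo' ` A j) (fo' (c j)) (fo' c')"
        using cM(3) j fo'_c' by simp
    qed
  qed
  ultimately show ?thesis by (rule that[OF c'(1)])
qed

lemma swap_preserves_fiber_same_qftp:
  assumes swap: "swap_preserves_fiber S b (set a) c c'" and c: "c \<notin> set a" "c' \<notin> set a"
  shows "same_qftp S (\<lambda>l. if l = 0 then c else a ! (l - 1)) (\<lambda>_. b)
    S (\<lambda>l. if l = 0 then c' else a ! (l - 1)) (\<lambda>_. b) {0..length a} {0}"
  unfolding same_qftp_def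
proof (intro conjI ballI allI impI)
  let ?\<sigma> = "\<lambda>x l. if l = 0 then x else a ! (l - 1)"
  fix l l' assume l: "l \<in> {0..length a}" and l': "l' \<in> {0..length a}"
  have "l \<noteq> 0 \<Longrightarrow> a ! (l - 1) \<in> set a" "l' \<noteq> 0 \<Longrightarrow> a ! (l' - 1) \<in> set a"
    using l l' by auto
  then show "?\<sigma> c l = ?\<sigma> c l' \<longleftrightarrow> ?\<sigma> c' l = ?\<sigma> c' l'"
    using c by (cases "l = 0"; cases "l' = 0") auto
next
  let ?\<sigma> = "\<lambda>x l. if l = 0 then x else a ! (l - 1)"
  fix i z ys assume "set ys \<subseteq> {0..length a}"
  then have sub: "set (map (?\<sigma> c) ys) \<subseteq> insert c (set a)"
    and eq: "map (?\<sigma> c') ys = map (\<lambda>x. if x = c then c' else x) (map (?\<sigma> c) ys)"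
    using c by (auto 0 3)
  show "PR S i b (map (?\<sigma> c) ys) = PR S i b (map (?\<sigma> c') ys)"
    unfolding eq by (rule swap[unfolded swap_preserves_fiber_def, rule_format, OF sub])
qed simp

lemma realization_by_swap:
  assumes N: "model_Tpfc k ar K N" and fr: "freeO \<phi> \<subseteq> {0..length a}" "freeP \<phi> \<subseteq> {0}"
    and a: "set a \<subseteq> OS N" and b: "b \<in> PS N"
    and c: "c \<in> realizations N \<phi> a b" "c \<notin> set a" and c': "c' \<in> OS N" "c' \<notin> set a"
    and swap: "swap_preserves_fiber N b (set a) c c'"
  shows "c' \<in> realizations N \<phi> a b"
proof -
  let ?\<sigma> = "\<lambda>x l. if l = 0 then x else a ! (l - 1)"
  have car: "in_carriers N (?\<sigma> x) (\<lambda>_. b) {0..length a} {0}" if "x \<in> OS N" for x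
    using that a b unfolding in_carriers_def by auto
  have "c \<in> OS N" using c(1) unfolding realizations_def by simp
  then have "psat N (?\<sigma> c) (\<lambda>_. b) \<phi> \<longleftrightarrow> psat N (?\<sigma> c') (\<lambda>_. b) \<phi>"
    using model_psat_same_qftp[OF N swap_preserves_fiber_same_qftp[OF swap c(2) c'(2)] car car _ _ fr]
      c'(1) by simp
  then show ?thesis using c(1) c'(1) unfolding realizations_def by simp
qed

lemma common_realization_outside:
  fixes n :: nat
  assumes FC: "fraisse_class k ar K" and SAP: "SAP K" and N: "model_Tpfc k ar K N"
    and fr: "\<forall>j<n. freeO (\<phi> j) \<subseteq> {0..length (a j)} \<and> freeP (\<phi> j) \<subseteq> {0}"
    and ab: "\<forall>j<n. set (a j) \<subseteq> OS N \<and> b j \<in> PS N" and inj: "inj_on b {..<n}"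
    and inf: "\<forall>j<n. infinite (realizations N (\<phi> j) (a j) (b j))"
    and X: "finite X" "X \<subseteq> OS N" and aX: "\<forall>j<n. set (a j) \<subseteq> X"
  obtains c' where "c' \<notin> X" "\<forall>j<n. c' \<in> realizations N (\<phi> j) (a j) (b j)"
proof -
  define c where "c j = (SOME x. x \<in> realizations N (\<phi> j) (a j) (b j) - X)" for j
  have c: "c j \<in> realizations N (\<phi> j) (a j) (b j) - X" if "j < n" for j
  proof -
    have "infinite (realizations N (\<phi> j) (a j) (b j) - X)" using inf that X(1) by simp
    then show ?thesis
      unfolding c_def by (rule someI_ex[OF infinite_imp_nonempty[unfolded ex_in_conv[symmetric]]])
  qed
  have "\<forall>j<n. b j \<in> PS N" using ab by simp
  moreover have "\<forall>j<n. c j \<in> OS N \<and> c j \<notin> set (a j)"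
    using c aX unfolding realizations_def by blast
  ultimately obtain c' where c': "c' \<in> OS N" "c' \<notin> X"
    and swap: "\<forall>j<n. swap_preserves_fiber N (b j) (set (a j)) (c j) c'"
    by (rule model_amalgamation[OF FC SAP N X _ inj aX])
  have "c' \<in> realizations N (\<phi> j) (a j) (b j)" if j: "j < n" for j
  proof (rule realization_by_swap[OF N])
    show "freeO (\<phi> j) \<subseteq> {0..length (a j)}" "freeP (\<phi> j) \<subseteq> {0}"
      "set (a j) \<subseteq> OS N" "b j \<in> PS N" using fr ab j by auto
    show "c j \<in> realizations N (\<phi> j) (a j) (b j)" "c j \<notin> set (a j)"
      using c[OF j] aX j by auto
    show "c' \<in> OS N" "c' \<notin> set (a j)" using c' aX j by auto
    show "swap_preserves_fiber N (b j) (set (a j)) (c j) c'" using swap j by simp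
  qed
  then show ?thesis using that c'(2) by blast
qed

theorem lemma4p7:
  fixes k :: nat and ar :: "nat \<Rightarrow> nat" and K :: "nat str set"
    and N :: "('o, 'p) pstr" and n :: nat
    and \<phi> :: "nat \<Rightarrow> pfm" and a :: "nat \<Rightarrow> 'o list" and b :: "nat \<Rightarrow> 'p"
  assumes "fraisse_class k ar K"
    and "SAP K"
    and "monster_Tpfc k ar K N"
    and "0 < n"
    and "\<forall>j<n. freeO (\<phi> j) \<subseteq> {0..length (a j)} \<and> freeP (\<phi> j) \<subseteq> {0}"
    and "\<forall>j<n. set (a j) \<subseteq> OS N \<and> b j \<in> PS N"
    and "inj_on b {..<n}"
    and "\<forall>j<n. infinite (realizations N (\<phi> j) (a j) (b j))"
  shows "infinite (\<Inter>j<n. realizations N (\<phi> j) (a j) (b j))"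
proof
  let ?I = "\<Inter>j<n. realizations N (\<phi> j) (a j) (b j)"
  assume "finite ?I"
  have N: "model_Tpfc k ar K N" using assms(3) unfolding monster_Tpfc_def by blast
  define X where "X = ?I \<union> (\<Union>j<n. set (a j))"
  have "?I \<subseteq> realizations N (\<phi> 0) (a 0) (b 0)" using assms(4) by blast
  then have X: "finite X" "X \<subseteq> OS N"
    using \<open>finite ?I\<close> assms(6) unfolding X_def realizations_def by auto
  have "\<forall>j<n. set (a j) \<subseteq> X" unfolding X_def by blast
  then obtain c where "c \<notin> X" "\<forall>j<n. c \<in> realizations N (\<phi> j) (a j) (b j)"
    by (rule common_realization_outside[OF assms(1,2) N assms(5-8) X])
  then show False unfolding X_def by blast
qed

end
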